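(* In the setting described in the context, assume in addition that $u$ is strictly concave. Then the optimal indemnity is unique if and only if at least one of the following holds: (1) $\theta\ne 0$; (2) $\operatorname{ess\,inf} X=0$, the $\mathbb{P}$-essential infimum. Here uniqueness means that whenever $I_1,I_2\in\mathcal{I}_c$ both maximize $I\mapsto\rho_b(u(w-X+I(X)-\pi(I(X))))$ over $\mathcal{I}_c$, then $I_1(X)=I_2(X)$ $\mathbb{P}$-a.s.
   Context: Let $(\Omega,\mathcal{F},\mathbb{P})$ be a probability space, and let $X\ge 0$ be a random variable with $\mathbb{E}X<\infty$. Let $\mathcal{I}_c$ be the set of functions $I:[0,\infty)\to[0,\infty)$ with $0\le I(x)\le x$ and $0\le I(x)-I(y)\le x-y$ for all $0\le y\le x$. For a function $j:[0,1]\to\mathbb{R}$ and a random variable $Y$ essentially bounded below, with $S_Y(t)=\mathbb{P}(Y>t)$, set $$\rho_j(Y)=\int_{-\infty}^0 \big(j(S_Y(t))-j(1)\big)\,dt+\int_0^\infty j(S_Y(t))\,dt.$$ The premium principle is $\pi(Y)=(1+\theta)\mathbb{E}Y+\rho_k(Y)$, where $\theta>-1$ and $k:[0,1]\to[0,\infty)$ is continuous and concave with $k(0)=k(1)=0$. The buyer has wealth $w$ and a strictly increasing concave utility $u\in C^2(\mathbb{R})$. She also has a continuously differentiable, strictly increasing, convex $b:[0,1]\to[0,1]$ with $b(0)=0$ and $b(1)=1$. All quantities $\pi(I(X))$ and $\rho_b(u(w-X+I(X)-\pi(I(X))))$ are assumed finite for all $I$. *)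

theory Defs
  imports "HOL-Probability.Probability"
begin

definition strictly_concave_on :: "real set \<Rightarrow> (real \<Rightarrow> real) \<Rightarrow> bool" where
  "strictly_concave_on S f \<longleftrightarrow>
     (\<forall>x\<in>S. \<forall>y\<in>S. \<forall>t. x \<noteq> y \<and> 0 < t \<and> t < 1 \<longrightarrow>
        t * f x + (1 - t) * f y < f (t * x + (1 - t) * y))"

(* the class I_c of admissible indemnities (only values on [0,\<infinity>) matter) *)
definition Ic :: "(real \<Rightarrow> real) set" where
  "Ic = {I. \<forall>x\<ge>0. 0 \<le> I x \<and> I x \<le> x \<and>
             (\<forall>y. 0 \<le> y \<and> y \<le> x \<longrightarrow> 0 \<le> I x - I y \<and> I x - I y \<le> x - y)}"

definition surv :: "'a measure \<Rightarrow> ('a \<Rightarrow> real) \<Rightarrow> real \<Rightarrow> real" where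
  "surv M Y t = measure M {\<omega>\<in>space M. Y \<omega> > t}"

definition rho :: "'a measure \<Rightarrow> (real \<Rightarrow> real) \<Rightarrow> ('a \<Rightarrow> real) \<Rightarrow> real" where
  "rho M j Y = (LBINT t:{..0}. j (surv M Y t) - j 1) + (LBINT t:{0<..}. j (surv M Y t))"

definition rho_finite :: "'a measure \<Rightarrow> (real \<Rightarrow> real) \<Rightarrow> ('a \<Rightarrow> real) \<Rightarrow> bool" where
  "rho_finite M j Y \<longleftrightarrow>
     set_integrable lborel {..0} (\<lambda>t. j (surv M Y t) - j 1) \<and>
     set_integrable lborel {0<..} (\<lambda>t. j (surv M Y t))"

definition premium :: "'a measure \<Rightarrow> real \<Rightarrow> (real \<Rightarrow> real) \<Rightarrow> ('a \<Rightarrow> real) \<Rightarrow> real" where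
  "premium M \<theta> k Y = (1 + \<theta>) * (\<integral>\<omega>. Y \<omega> \<partial>M) + rho M k Y"

definition objective :: "'a measure \<Rightarrow> real \<Rightarrow> (real \<Rightarrow> real) \<Rightarrow> (real \<Rightarrow> real) \<Rightarrow> real
     \<Rightarrow> (real \<Rightarrow> real) \<Rightarrow> ('a \<Rightarrow> real) \<Rightarrow> (real \<Rightarrow> real) \<Rightarrow> real" where
  "objective M \<theta> k b w u X I =
     rho M b (\<lambda>\<omega>. u (w - X \<omega> + I (X \<omega>) - premium M \<theta> k (\<lambda>\<omega>'. I (X \<omega>'))))"

definition optimal :: "'a measure \<Rightarrow> real \<Rightarrow> (real \<Rightarrow> real) \<Rightarrow> (real \<Rightarrow> real) \<Rightarrow> real
     \<Rightarrow> (real \<Rightarrow> real) \<Rightarrow> ('a \<Rightarrow> real) \<Rightarrow> (real \<Rightarrow> real) \<Rightarrow> bool" where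
  "optimal M \<theta> k b w u X I \<longleftrightarrow>
     I \<in> Ic \<and> (\<forall>J\<in>Ic. objective M \<theta> k b w u X J \<le> objective M \<theta> k b w u X I)"

definition essinf :: "'a measure \<Rightarrow> ('a \<Rightarrow> real) \<Rightarrow> ereal" where
  "essinf M f = - esssup M (\<lambda>\<omega>. - ereal (f \<omega>))"

end

theory Submission
  imports Defs "HOL-Library.Diagonal_Subsequence"
begin

text \<open>
  The premium and the objective are Choquet integrals. Against the Lebesgue--Stieltjes measure
  with distribution function \<open>j(1) - j(S\<^sub>Z(t))\<close>, the Choquet integral \<open>\<rho>\<^sub>j(g(Z))\<close> of a
  continuous nondecreasing \<open>g\<close> becomes an ordinary integral of \<open>g\<close>. Splitting the concave \<open>k\<close>
  at its peak into a nondecreasing and a nonincreasing part, the premium becomes affine in the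
  indemnity.

  If \<open>I\<^sub>1\<close> and \<open>I\<^sub>2\<close> are optimal, then so is their average. Strict concavity of \<open>u\<close>, together
  with strict monotonicity of \<open>b\<close>, forces the two final wealths to agree almost surely, i.e.
  \<open>I\<^sub>1(X) = I\<^sub>2(X) + c\<close>. Comparing the premiums gives \<open>\<theta> c = 0\<close>, and for \<open>\<theta> = 0\<close> the bounds
  \<open>0 \<le> I\<^sub>i(X) \<le> X\<close> give \<open>|c| \<le> ess inf X\<close>.

  Conversely, let \<open>\<theta> = 0\<close> and \<open>ess inf X > 0\<close>. An optimal indemnity exists, because the
  admissible indemnities are sequentially compact under pointwise convergence and the objective
  is upper semicontinuous by Fatou's lemma. Shifting this indemnity by a nonzero constant above
  some level below \<open>ess inf X\<close> gives a different \<open>I(X)\<close> with the same final wealth.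
\<close>

section \<open>Admissible indemnities\<close>

lemma IcD:
  assumes "I \<in> Ic" "0 \<le> y" "y \<le> x"
  shows "0 \<le> I x" "I x \<le> x" "I y \<le> I x" "I x - I y \<le> x - y"
  using assms unfolding Ic_def by auto

lemma IcI:
  assumes "\<And>x. 0 \<le> x \<Longrightarrow> 0 \<le> I x" "\<And>x. 0 \<le> x \<Longrightarrow> I x \<le> x"
    and "\<And>x y. 0 \<le> y \<Longrightarrow> y \<le> x \<Longrightarrow> I y \<le> I x" "\<And>x y. 0 \<le> y \<Longrightarrow> y \<le> x \<Longrightarrow> I x - I y \<le> x - y"
  shows "I \<in> Ic"
  using assms unfolding Ic_def by auto

lemma Ic_id: "(\<lambda>x. x) \<in> Ic"
  by (rule IcI) auto

lemma Ic_convex_comb: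
  assumes "I1 \<in> Ic" "I2 \<in> Ic" "0 \<le> t" "t \<le> 1"
  shows "(\<lambda>x. t * I1 x + (1 - t) * I2 x) \<in> Ic"
proof (rule IcI)
  fix x y :: real assume "0 \<le> y" "y \<le> x"
  note h = IcD[OF assms(1) this] IcD[OF assms(2) this]
  have "t * (I1 x - I1 y) + (1 - t) * (I2 x - I2 y) \<le> t * (x - y) + (1 - t) * (x - y)"
    using h assms(3,4) by (intro add_mono mult_left_mono) auto
  then show "t * I1 x + (1 - t) * I2 x - (t * I1 y + (1 - t) * I2 y) \<le> x - y"
    by (simp add: algebra_simps)
  show "t * I1 y + (1 - t) * I2 y \<le> t * I1 x + (1 - t) * I2 x"
    using h assms(3,4) by (intro add_mono mult_left_mono) auto
next
  fix x :: real assume "0 \<le> x"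
  note h = IcD[OF assms(1) this order_refl] IcD[OF assms(2) this order_refl]
  show "0 \<le> t * I1 x + (1 - t) * I2 x" using h assms(3,4) by simp
  have "t * I1 x + (1 - t) * I2 x \<le> t * x + (1 - t) * x"
    using h assms(3,4) by (intro add_mono mult_left_mono) auto
  then show "t * I1 x + (1 - t) * I2 x \<le> x" by (simp add: algebra_simps)
qed

lemma Ic_lower_shift:
  assumes "I \<in> Ic" "0 \<le> c"
  shows "(\<lambda>x. max 0 (I x - c)) \<in> Ic"
proof (rule IcI)
  fix x y :: real assume "0 \<le> y" "y \<le> x"
  note IcD[OF assms(1) this]
  then show "max 0 (I y - c) \<le> max 0 (I x - c)" "max 0 (I x - c) - max 0 (I y - c) \<le> x - y"
    by (auto simp: max_def)
next
  fix x :: real assume "0 \<le> x"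
  with IcD[OF assms(1) this order_refl] assms(2)
  show "0 \<le> max 0 (I x - c)" "max 0 (I x - c) \<le> x" by auto
qed

lemma Ic_upper_shift:
  assumes "I \<in> Ic" "0 \<le> c"
  shows "(\<lambda>x. min x (I x + c)) \<in> Ic"
proof (rule IcI)
  fix x y :: real assume "0 \<le> y" "y \<le> x"
  note IcD[OF assms(1) this]
  then show "min y (I y + c) \<le> min x (I x + c)" "min x (I x + c) - min y (I y + c) \<le> x - y"
    by (auto simp: min_def)
next
  fix x :: real assume "0 \<le> x"
  with IcD[OF assms(1) this order_refl] assms(2)
  show "0 \<le> min x (I x + c)" "min x (I x + c) \<le> x" by auto
qed

lemma Ic_exists_AE_shift:
  assumes I: "I \<in> Ic" and d: "0 < d" and X: "AE \<omega> in M. d < X \<omega>"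
  obtains J c where "J \<in> Ic" "c \<noteq> 0" "AE \<omega> in M. J (X \<omega>) = I (X \<omega>) + c"
proof (cases "I d = 0")
  case True
  have "AE \<omega> in M. min (X \<omega>) (I (X \<omega>) + d) = I (X \<omega>) + d"
  proof (rule AE_mp[OF X], intro AE_I2 impI)
    fix \<omega> assume "d < X \<omega>"
    then have "I (X \<omega>) - I d \<le> X \<omega> - d" using IcD(4)[OF I, of d "X \<omega>"] d by simp
    then show "min (X \<omega>) (I (X \<omega>) + d) = I (X \<omega>) + d" using True by simp
  qed
  then show ?thesis using that[OF Ic_upper_shift[OF I, of d], of d] d by simp
next
  case False
  then have "0 < I d" using IcD(1)[OF I, of d d] d by simp
  have "AE \<omega> in M. max 0 (I (X \<omega>) - I d) = I (X \<omega>) + - I d"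
    using X by eventually_elim (use IcD(3)[OF I, of d] d in auto)
  then show ?thesis using that[OF Ic_lower_shift[OF I, of "I d"], of "- I d"] \<open>0 < I d\<close> by simp
qed

definition extend_zero :: "(real \<Rightarrow> real) \<Rightarrow> real \<Rightarrow> real" where
  "extend_zero I x = I (max x 0)"

lemma extend_zero_eq [simp]: "0 \<le> x \<Longrightarrow> extend_zero I x = I x"
  by (simp add: extend_zero_def)

lemma extend_zero_bounds:
  assumes "I \<in> Ic"
  shows "0 \<le> extend_zero I x" "extend_zero I x \<le> max x 0"
  using IcD[OF assms, of "max x 0" "max x 0"] by (auto simp: extend_zero_def)

lemma mono_extend_zero:
  assumes "I \<in> Ic"
  shows "mono (extend_zero I)"
  by (rule monoI) (use IcD(3)[OF assms] in \<open>auto simp: extend_zero_def\<close>)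

lemma lipschitz_extend_zero:
  assumes "I \<in> Ic"
  shows "1-lipschitz_on UNIV (extend_zero I)"
proof (rule lipschitz_onI)
  have *: "\<bar>extend_zero I x - extend_zero I y\<bar> \<le> \<bar>x - y\<bar>" if "y \<le> x" for x y
    using IcD[OF assms, of "max y 0" "max x 0"] that by (auto simp: extend_zero_def max_def)
  show "dist (extend_zero I x) (extend_zero I y) \<le> 1 * dist x y" for x y
    using *[of y x] *[of x y] by (cases "y \<le> x") (auto simp: dist_real_def abs_minus_commute)
qed simp

lemma continuous_on_extend_zero: "I \<in> Ic \<Longrightarrow> continuous_on UNIV (extend_zero I)"
  using lipschitz_extend_zero by (rule lipschitz_on_continuous_on)

lemma diagonal_subseq_convergent:
  fixes f :: "nat \<Rightarrow> 'a \<Rightarrow> real"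
  assumes "countable D" and bounded: "\<And>x. x \<in> D \<Longrightarrow> bounded (range (\<lambda>n. f n x))"
  obtains r where "strict_mono r" "\<And>x. x \<in> D \<Longrightarrow> convergent (\<lambda>n. f (r n) x)"
proof (cases "D = {}")
  case False
  define e where "e = from_nat_into D"
  interpret subseqs "\<lambda>m s. convergent (\<lambda>n. f (s n) (e m))"
  proof
    fix m and s :: "nat \<Rightarrow> nat"
    have "bounded (range (\<lambda>n. f (s n) (e m)))"
      using bounded[of "e m"] from_nat_into[OF False] by (auto simp: e_def intro: bounded_subset)
    then obtain l r where "strict_mono r" "((\<lambda>n. f (s n) (e m)) \<circ> r) \<longlonglongrightarrow> l"
      using bounded_imp_convergent_subsequence by blast
    then show "\<exists>r. strict_mono r \<and> convergent (\<lambda>n. f ((s \<circ> r) n) (e m))"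
      by (auto simp: convergent_def o_def)
  qed
  have "convergent (\<lambda>n. f (diagseq n) (e m))" for m
  proof -
    have "convergent (\<lambda>n. f ((diagseq \<circ> (+) (Suc m)) n) (e m))"
      by (rule diagseq_holds) (auto dest: convergent_subseq_convergent simp: o_def)
    then show ?thesis
      using convergent_ignore_initial_segment[of "\<lambda>n. f (diagseq n) (e m)" "Suc m"]
      by (simp add: add.commute)
  qed
  moreover have "x \<in> range e" if "x \<in> D" for x
    using that False \<open>countable D\<close> by (simp add: e_def)
  ultimately show ?thesis
    using that subseq_diagseq by blast
qed (use that in \<open>auto intro: strict_mono_id[unfolded id_def]\<close>)

lemma Ic_convergent_if_convergent_on_rationals:
  fixes f :: "nat \<Rightarrow> real \<Rightarrow> real"
  assumes f: "\<And>n. f n \<in> Ic" and conv: "\<And>q. q \<in> \<rat> \<Longrightarrow> 0 \<le> q \<Longrightarrow> convergent (\<lambda>n. f n q)"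
    and x: "0 \<le> x"
  shows "convergent (\<lambda>n. f n x)"
proof -
  have "Cauchy (\<lambda>n. f n x)"
  proof (rule CauchyI)
    fix e :: real assume e: "0 < e"
    obtain q where q: "q \<in> \<rat>" "x < q" "q < x + e / 3"
      using Rats_dense_in_real[of x "x + e / 3"] e by auto
    have "Cauchy (\<lambda>n. f n q)"
      using q(2) x by (intro convergent_Cauchy conv q(1)) linarith
    from CauchyD[OF this, of "e / 3"] e
    obtain N where N: "\<forall>m\<ge>N. \<forall>n\<ge>N. \<bar>f m q - f n q\<bar> < e / 3"
      by auto
    have near: "\<bar>f n x - f n q\<bar> \<le> q - x" for n
      using IcD[OF f x, of q] q(2) by auto
    show "\<exists>M. \<forall>m\<ge>M. \<forall>n\<ge>M. norm (f m x - f n x) < e"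
    proof (intro exI allI impI)
      fix m n assume "N \<le> m" "N \<le> n"
      have "\<bar>f m x - f n x\<bar> \<le> \<bar>f m x - f m q\<bar> + \<bar>f m q - f n q\<bar> + \<bar>f n x - f n q\<bar>"
        by (smt (verit))
      then show "norm (f m x - f n x) < e"
        using N[rule_format, OF \<open>N \<le> m\<close> \<open>N \<le> n\<close>] near[of m] near[of n] q(3) by simp
    qed
  qed
  then show ?thesis by (simp add: Cauchy_convergent_iff)
qed

lemma Ic_pointwise_limit:
  fixes f :: "nat \<Rightarrow> real \<Rightarrow> real"
  assumes f: "\<And>n. f n \<in> Ic" and lim: "\<And>x. 0 \<le> x \<Longrightarrow> (\<lambda>n. f n x) \<longlonglongrightarrow> L x"
  shows "L \<in> Ic"
proof (rule IcI)
  fix x :: real assume x: "0 \<le> x"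
  show "0 \<le> L x" by (rule LIMSEQ_le_const[OF lim[OF x]]) (use IcD[OF f x order_refl] in auto)
  show "L x \<le> x" by (rule LIMSEQ_le_const2[OF lim[OF x]]) (use IcD[OF f x order_refl] in auto)
next
  fix x y :: real assume y: "0 \<le> y" "y \<le> x"
  then have diff: "(\<lambda>n. f n x - f n y) \<longlonglongrightarrow> L x - L y"
    by (intro tendsto_diff lim) auto
  have "0 \<le> L x - L y" by (rule LIMSEQ_le_const[OF diff]) (use IcD(3)[OF f y] in auto)
  then show "L y \<le> L x" by simp
  show "L x - L y \<le> x - y" by (rule LIMSEQ_le_const2[OF diff]) (use IcD(4)[OF f y] in auto)
qed

lemma Ic_seq_compact:
  fixes f :: "nat \<Rightarrow> real \<Rightarrow> real"
  assumes f: "\<And>n. f n \<in> Ic"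
  obtains r L where "strict_mono r" "L \<in> Ic" "\<And>x. 0 \<le> x \<Longrightarrow> (\<lambda>n. f (r n) x) \<longlonglongrightarrow> L x"
proof -
  have bounded: "bounded (range (\<lambda>n. f n q))" if "q \<in> \<rat> \<inter> {0..}" for q
  proof (rule bounded_subset[OF bounded_closed_interval[of 0 q]])
    show "range (\<lambda>n. f n q) \<subseteq> {0..q}" using IcD[OF f, of q q] that by auto
  qed
  obtain r where r: "strict_mono r"
    and conv: "\<And>q. q \<in> \<rat> \<inter> {0..} \<Longrightarrow> convergent (\<lambda>n. f (r n) q)"
  proof (rule diagonal_subseq_convergent[of "\<rat> \<inter> {0..}" f])
    show "countable (\<rat> \<inter> {0::real..})" by (simp add: countable_rat)
  qed (use bounded that in auto)
  define L where "L x = lim (\<lambda>n. f (r n) x)" for x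
  have lim: "(\<lambda>n. f (r n) x) \<longlonglongrightarrow> L x" if "0 \<le> x" for x
  proof -
    have "convergent (\<lambda>n. f (r n) x)"
      by (rule Ic_convergent_if_convergent_on_rationals[OF f conv that]) simp
    then show ?thesis by (simp add: L_def convergent_LIMSEQ_iff)
  qed
  show ?thesis
    by (rule that[OF r Ic_pointwise_limit[OF f lim] lim])
qed

section \<open>Survival functions and distortion functionals\<close>

lemma surv_cong: "(\<And>\<omega>. \<omega> \<in> space M \<Longrightarrow> f \<omega> = g \<omega>) \<Longrightarrow> surv M f = surv M g"
  unfolding surv_def by (intro ext arg_cong[where f = "measure M"]) auto

lemma surv_cong_AE:
  assumes "f \<in> borel_measurable M" "g \<in> borel_measurable M" "AE \<omega> in M. f \<omega> = g \<omega>"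
  shows "surv M f = surv M g"
  unfolding surv_def by (intro ext measure_eq_AE) (use assms in auto)

lemma rho_cong:
  assumes "\<And>\<omega>. \<omega> \<in> space M \<Longrightarrow> f \<omega> = g \<omega>"
  shows "rho M j f = rho M j g" "rho_finite M j f = rho_finite M j g"
proof -
  have "surv M f = surv M g" by (rule surv_cong) (rule assms)
  then show "rho M j f = rho M j g" "rho_finite M j f = rho_finite M j g"
    unfolding rho_def rho_finite_def by simp_all
qed

lemma rho_cong_AE:
  assumes "f \<in> borel_measurable M" "g \<in> borel_measurable M" "AE \<omega> in M. f \<omega> = g \<omega>"
  shows "rho M j f = rho M j g"
  unfolding rho_def using surv_cong_AE[OF assms] by simp

lemma surv_nonneg: "0 \<le> surv M Z t"
  by (simp add: surv_def)

lemma (in prob_space) surv_le_1: "surv M Z t \<le> 1"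
  by (simp add: surv_def)

lemma (in finite_measure) surv_antimono:
  "Z \<in> borel_measurable M \<Longrightarrow> s \<le> t \<Longrightarrow> surv M Z t \<le> surv M Z s"
  unfolding surv_def by (intro finite_measure_mono) auto

lemma (in finite_measure) surv_mono:
  "Z \<in> borel_measurable M \<Longrightarrow> (\<And>\<omega>. \<omega> \<in> space M \<Longrightarrow> Y \<omega> \<le> Z \<omega>) \<Longrightarrow> surv M Y t \<le> surv M Z t"
  unfolding surv_def by (intro finite_measure_mono) (auto intro: less_le_trans)

lemma (in prob_space) surv_eq_1_minus_cdf:
  assumes "Z \<in> borel_measurable M"
  shows "surv M Z t = 1 - cdf (distr M borel Z) t"
proof -
  have "{\<omega>\<in>space M. Z \<omega> > t} = space M - (Z -` {..t} \<inter> space M)"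
    by auto
  moreover have "Z -` {..t} \<inter> space M \<in> events"
    using assms by measurable
  ultimately show ?thesis
    using assms by (simp add: surv_def cdf_def measure_distr prob_compl)
qed

lemma (in prob_space) surv_diff:
  assumes "Z \<in> borel_measurable M" "a \<le> c"
  shows "surv M Z a - surv M Z c = measure M {\<omega>\<in>space M. Z \<omega> \<in> {a<..c}}"
proof -
  have "{\<omega>\<in>space M. a < Z \<omega>} = {\<omega>\<in>space M. c < Z \<omega>} \<union> {\<omega>\<in>space M. Z \<omega> \<in> {a<..c}}"
    using assms(2) by auto
  moreover have "measure M ({\<omega>\<in>space M. c < Z \<omega>} \<union> {\<omega>\<in>space M. Z \<omega> \<in> {a<..c}}) =
      measure M {\<omega>\<in>space M. c < Z \<omega>} + measure M {\<omega>\<in>space M. Z \<omega> \<in> {a<..c}}"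
    by (rule finite_measure_Union) (use assms(1) in auto)
  ultimately show ?thesis unfolding surv_def by simp
qed

lemma (in prob_space) surv_tendsto_at_top:
  assumes "Z \<in> borel_measurable M"
  shows "(surv M Z \<longlongrightarrow> 0) at_top"
proof -
  have "((\<lambda>t. 1 - cdf (distr M borel Z) t) \<longlongrightarrow> 1 - 1) at_top"
    using real_distribution.cdf_lim_at_top_prob[OF real_distribution_distr[OF assms]]
    by (intro tendsto_intros)
  moreover have "surv M Z = (\<lambda>t. 1 - cdf (distr M borel Z) t)"
    using surv_eq_1_minus_cdf[OF assms] by (simp add: fun_eq_iff)
  ultimately show ?thesis by simp
qed

lemma (in prob_space) borel_measurable_distorted_surv:
  fixes j :: "real \<Rightarrow> real"
  assumes "mono_on {0..1} j" "Z \<in> borel_measurable M"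
  shows "(\<lambda>t. j (surv M Z t)) \<in> borel_measurable borel"
proof -
  have "mono (\<lambda>t. - j (surv M Z t))"
  proof (rule monoI)
    fix s t :: real assume "s \<le> t"
    then have "j (surv M Z t) \<le> j (surv M Z s)"
      by (intro mono_onD[OF assms(1)] surv_antimono[OF assms(2)]) (auto simp: surv_nonneg surv_le_1)
    then show "- j (surv M Z s) \<le> - j (surv M Z t)" by simp
  qed
  then have "(\<lambda>t. - (- j (surv M Z t))) \<in> borel_measurable borel"
    by (intro borel_measurable_uminus borel_measurable_mono)
  then show ?thesis by simp
qed

lemma essinf_le_AE:
  "AE \<omega> in M. essinf M X \<le> ereal (X \<omega>)"
  using esssup_AE[of "\<lambda>\<omega>. - ereal (X \<omega>)" M] unfolding essinf_def
  by eventually_elim (simp add: ereal_uminus_le_reorder)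

lemma essinf_greatest:
  assumes "X \<in> borel_measurable M" "AE \<omega> in M. a \<le> X \<omega>"
  shows "ereal a \<le> essinf M X"
proof -
  have "esssup M (\<lambda>\<omega>. - ereal (X \<omega>)) \<le> - ereal a"
    using assms by (intro esssup_I) auto
  then have "- (- ereal a) \<le> - esssup M (\<lambda>\<omega>. - ereal (X \<omega>))"
    using ereal_minus_le_minus by blast
  then show ?thesis unfolding essinf_def by simp
qed

lemma rho_add:
  assumes "rho_finite M j1 Y" "rho_finite M j2 Y"
  shows "rho_finite M (\<lambda>p. j1 p + j2 p) Y" "rho M (\<lambda>p. j1 p + j2 p) Y = rho M j1 Y + rho M j2 Y"
proof -
  have *: "j1 p + j2 p - (j1 1 + j2 1) = (j1 p - j1 1) + (j2 p - j2 1)" for p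
    by simp
  show "rho_finite M (\<lambda>p. j1 p + j2 p) Y" "rho M (\<lambda>p. j1 p + j2 p) Y = rho M j1 Y + rho M j2 Y"
    using assms unfolding rho_finite_def rho_def * by (simp_all add: set_integral_add)
qed

lemma AE_lower_bound_if_essinf_nonzero:
  assumes "X \<in> borel_measurable M" "AE \<omega> in M. 0 \<le> X \<omega>" "essinf M X \<noteq> 0"
  obtains d where "0 < d" "AE \<omega> in M. d < X \<omega>"
proof -
  have "0 < essinf M X"
    using essinf_greatest[OF assms(1,2)] assms(3) by (simp add: zero_ereal_def order_less_le)
  then obtain z where z: "0 < z" "z < essinf M X" using dense by blast
  then obtain d where d: "z = ereal d" by (cases z) auto
  have "AE \<omega> in M. d < X \<omega>"
    using essinf_le_AE[of M X]
  proof eventually_elim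
    case (elim \<omega>)
    then show ?case using less_le_trans[of "ereal d" "essinf M X" "ereal (X \<omega>)"] z d by simp
  qed
  then show ?thesis using that z d by simp
qed

section \<open>Choquet integrals as Lebesgue--Stieltjes integrals\<close>

lemma nn_integral_pos_part_eq_layers:
  assumes "sigma_finite_measure Q" and [measurable]: "g \<in> borel_measurable Q"
  shows "(\<integral>\<^sup>+x. ennreal (max (g x) 0) \<partial>Q) =
    (\<integral>\<^sup>+t. indicator {0<..} t * emeasure Q {x\<in>space Q. t < g x} \<partial>lborel)"
proof -
  interpret pair_sigma_finite Q lborel
    by (simp add: pair_sigma_finite_def assms(1) lborel.sigma_finite_measure_axioms)
  have "ennreal (max (g x) 0) = (\<integral>\<^sup>+t. indicator {0<..} t * indicator {x\<in>space Q. t < g x} x \<partial>lborel)"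
    if "x \<in> space Q" for x
  proof -
    have "(\<lambda>t. indicator {0<..} t * indicator {x\<in>space Q. t < g x} x) = (indicator {0<..<max (g x) 0} :: real \<Rightarrow> ennreal)"
      using that by (auto simp: indicator_def fun_eq_iff)
    then show ?thesis by simp
  qed
  then have "(\<integral>\<^sup>+x. ennreal (max (g x) 0) \<partial>Q) =
      (\<integral>\<^sup>+x. (\<integral>\<^sup>+t. indicator {0<..} t * indicator {x\<in>space Q. t < g x} x \<partial>lborel) \<partial>Q)"
    by (rule nn_integral_cong)
  also have "\<dots> = (\<integral>\<^sup>+t. (\<integral>\<^sup>+x. indicator {0<..} t * indicator {x\<in>space Q. t < g x} x \<partial>Q) \<partial>lborel)"
    by (rule Fubini'[symmetric]) measurable
  also have "\<dots> = (\<integral>\<^sup>+t. indicator {0<..} t * emeasure Q {x\<in>space Q. t < g x} \<partial>lborel)"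
    by (intro nn_integral_cong) (simp add: nn_integral_cmult)
  finally show ?thesis .
qed

lemma nn_integral_neg_part_eq_layers:
  assumes "sigma_finite_measure Q" and [measurable]: "g \<in> borel_measurable Q"
  shows "(\<integral>\<^sup>+x. ennreal (max (- g x) 0) \<partial>Q) =
    (\<integral>\<^sup>+t. indicator {..0} t * emeasure Q {x\<in>space Q. g x \<le> t} \<partial>lborel)"
proof -
  interpret pair_sigma_finite Q lborel
    by (simp add: pair_sigma_finite_def assms(1) lborel.sigma_finite_measure_axioms)
  have "ennreal (max (- g x) 0) = (\<integral>\<^sup>+t. indicator {..0} t * indicator {x\<in>space Q. g x \<le> t} x \<partial>lborel)"
    if "x \<in> space Q" for x
  proof -
    have "(\<lambda>t. indicator {..0} t * indicator {x\<in>space Q. g x \<le> t} x) = (indicator {g x..0} :: real \<Rightarrow> ennreal)"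
      using that by (auto simp: indicator_def fun_eq_iff)
    then show ?thesis by (cases "g x \<le> 0") (simp_all add: max_def)
  qed
  then have "(\<integral>\<^sup>+x. ennreal (max (- g x) 0) \<partial>Q) =
      (\<integral>\<^sup>+x. (\<integral>\<^sup>+t. indicator {..0} t * indicator {x\<in>space Q. g x \<le> t} x \<partial>lborel) \<partial>Q)"
    by (rule nn_integral_cong)
  also have "\<dots> = (\<integral>\<^sup>+t. (\<integral>\<^sup>+x. indicator {..0} t * indicator {x\<in>space Q. g x \<le> t} x \<partial>Q) \<partial>lborel)"
    by (rule Fubini'[symmetric]) measurable
  also have "\<dots> = (\<integral>\<^sup>+t. indicator {..0} t * emeasure Q {x\<in>space Q. g x \<le> t} \<partial>lborel)"
    by (intro nn_integral_cong) (simp add: nn_integral_cmult)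
  finally show ?thesis .
qed

lemma upper_level_set_mono_continuous:
  fixes g :: "real \<Rightarrow> real"
  assumes "continuous_on UNIV g" "mono g"
  obtains "{x. t < g x} = UNIV" | "{x. t < g x} = {}" | a where "{x. t < g x} = {a<..}"
proof -
  let ?A = "{x. t < g x}"
  consider "?A = UNIV" | "?A = {}" | x0 y0 where "\<not> t < g x0" "t < g y0" by blast
  then show ?thesis
  proof cases
    case 3
    have below: "x0 < y" if "y \<in> ?A" for y
      using that 3(1) monoD[OF assms(2), of y x0] by (cases "x0 < y") auto
    then have bdd: "bdd_below ?A" by (auto intro!: bdd_belowI[of _ x0] less_imp_le)
    have ne: "?A \<noteq> {}" using 3(2) by auto
    have "open ?A" using open_Collect_less[OF continuous_on_const assms(1)] .
    have "?A = {Inf ?A<..}"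
    proof (intro set_eqI iffI)
      fix y assume y: "y \<in> ?A"
      obtain e where e: "e > 0" "ball y e \<subseteq> ?A" using openE[OF \<open>open ?A\<close> y] by blast
      have "y - e / 2 \<in> ?A" using e by (intro subsetD[OF e(2)]) (auto simp: dist_real_def)
      then have "Inf ?A \<le> y - e / 2" by (rule cInf_lower[OF _ bdd])
      then show "y \<in> {Inf ?A<..}" using e by auto
    next
      fix y assume "y \<in> {Inf ?A<..}"
      then obtain z where "z \<in> ?A" "z < y" using cInf_less_iff[OF ne bdd] by auto
      then show "y \<in> ?A" using monoD[OF assms(2), of z y] by auto
    qed
    then show ?thesis by (rule that(3))
  qed (use that in auto)
qed

lemma open_real_countable_Union_Ioc:
  fixes U :: "real set"
  assumes "open U"
  obtains C where "countable C" "\<And>a c. (a, c) \<in> C \<Longrightarrow> a \<le> c \<and> {a<..c} \<subseteq> U"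
    "U = (\<Union>(a, c)\<in>C. {a<..c})"
proof
  let ?C = "{(a, c). a \<in> \<rat> \<and> c \<in> \<rat> \<and> a \<le> c \<and> {a<..c} \<subseteq> U}"
  show "countable ?C"
    by (rule countable_subset[of _ "\<rat> \<times> \<rat>"]) (auto intro: countable_SIGMA countable_rat)
  show "\<And>a c. (a, c) \<in> ?C \<Longrightarrow> a \<le> c \<and> {a<..c} \<subseteq> U" by auto
  show "U = (\<Union>(a, c)\<in>?C. {a<..c})"
  proof (intro set_eqI iffI)
    fix x assume "x \<in> U"
    then obtain e where e: "e > 0" "ball x e \<subseteq> U" using openE[OF assms] by blast
    obtain a where a: "a \<in> \<rat>" "x - e < a" "a < x" using Rats_dense_in_real[of "x - e" x] e by auto
    obtain c where c: "c \<in> \<rat>" "x < c" "c < x + e" using Rats_dense_in_real[of x "x + e"] e by auto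
    have "{a<..c} \<subseteq> ball x e" using a c by (auto simp: dist_real_def)
    then show "x \<in> (\<Union>(a, c)\<in>?C. {a<..c})" using a c e by force
  qed auto
qed

definition distortion_measure :: "'a measure \<Rightarrow> ('a \<Rightarrow> real) \<Rightarrow> (real \<Rightarrow> real) \<Rightarrow> real measure" where
  "distortion_measure M Z j = interval_measure (\<lambda>a. j 1 - j (surv M Z a))"

locale distortion = prob_space M for M :: "'a measure" +
  fixes Z :: "'a \<Rightarrow> real" and j :: "real \<Rightarrow> real"
  assumes Z_measurable [measurable]: "Z \<in> borel_measurable M"
    and j_continuous: "continuous_on {0..1} j" and j_mono: "mono_on {0..1} j" and j_0: "j 0 = 0"
begin

abbreviation "Q \<equiv> distortion_measure M Z j"
abbreviation "Q_cdf \<equiv> \<lambda>a. j 1 - j (surv M Z a)"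

lemma j_nonneg: "p \<in> {0..1} \<Longrightarrow> 0 \<le> j p"
  using mono_onD[OF j_mono, of 0 p] j_0 by auto

lemma j_le_j1: "p \<in> {0..1} \<Longrightarrow> j p \<le> j 1"
  using mono_onD[OF j_mono, of p 1] by auto

lemma j1_nonneg: "0 \<le> j 1"
  using j_nonneg[of 1] by simp

lemma surv_in_01: "surv M Y t \<in> {0..1}"
  using surv_nonneg surv_le_1 by auto

lemma j_surv_nonneg: "0 \<le> j (surv M Y t)"
  and j_surv_le_j1: "j (surv M Y t) \<le> j 1"
  using j_nonneg j_le_j1 surv_in_01 by auto

lemma Q_cdf_mono: "x \<le> y \<Longrightarrow> Q_cdf x \<le> Q_cdf y"
  using mono_onD[OF j_mono] surv_antimono[OF Z_measurable] surv_in_01 by auto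

lemma tendsto_j:
  "(f \<longlongrightarrow> l) F \<Longrightarrow> l \<in> {0..1} \<Longrightarrow> (\<And>x. f x \<in> {0..1}) \<Longrightarrow> ((\<lambda>x. j (f x)) \<longlongrightarrow> j l) F"
  by (intro continuous_on_tendsto_compose[OF j_continuous]) auto

lemma Q_cdf_right_continuous: "continuous (at_right a) Q_cdf"
proof -
  interpret D: real_distribution "distr M borel Z"
    by (rule real_distribution_distr[OF Z_measurable])
  have "((\<lambda>x. 1 - cdf (distr M borel Z) x) \<longlongrightarrow> 1 - cdf (distr M borel Z) a) (at_right a)"
    using D.cdf_is_right_cont[of a] by (intro tendsto_intros) (simp add: continuous_within)
  then have "(surv M Z \<longlongrightarrow> surv M Z a) (at_right a)"
    by (simp add: surv_eq_1_minus_cdf[OF Z_measurable, abs_def])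
  then have "(Q_cdf \<longlongrightarrow> Q_cdf a) (at_right a)"
    using surv_in_01 by (intro tendsto_intros tendsto_j)
  then show ?thesis by (simp add: continuous_within)
qed

lemma Q_cdf_at_bot: "(Q_cdf \<longlongrightarrow> 0) at_bot"
proof -
  interpret D: real_distribution "distr M borel Z"
    by (rule real_distribution_distr[OF Z_measurable])
  have "((\<lambda>x. 1 - cdf (distr M borel Z) x) \<longlongrightarrow> 1 - 0) at_bot"
    using D.cdf_lim_at_bot by (intro tendsto_intros)
  then have "(surv M Z \<longlongrightarrow> 1) at_bot"
    by (simp add: surv_eq_1_minus_cdf[OF Z_measurable, abs_def])
  then have "(Q_cdf \<longlongrightarrow> j 1 - j 1) at_bot"
    using surv_in_01 by (intro tendsto_intros tendsto_j) auto
  then show ?thesis by simp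
qed

lemma Q_cdf_at_top: "(Q_cdf \<longlongrightarrow> j 1) at_top"
proof -
  have "(Q_cdf \<longlongrightarrow> j 1 - j 0) at_top"
    using surv_in_01 by (intro tendsto_intros tendsto_j surv_tendsto_at_top Z_measurable) auto
  then show ?thesis by (simp add: j_0)
qed

lemmas Q_cdf_props = Q_cdf_mono Q_cdf_right_continuous Q_cdf_at_bot Q_cdf_at_top

lemma finite_measure_Q: "finite_measure Q"
  using finite_borel_measure_interval_measure[OF Q_cdf_props j1_nonneg]
  unfolding distortion_measure_def by (simp add: finite_borel_measure_def)

lemma sets_Q [simp, measurable_cong]: "sets Q = sets borel"
  and space_Q [simp]: "space Q = UNIV"
  by (simp_all add: distortion_measure_def)

lemma measure_Q_UNIV: "measure Q UNIV = j 1"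
  using interval_measure_UNIV[OF Q_cdf_props j1_nonneg] j1_nonneg
  by (simp add: distortion_measure_def measure_def)

lemma measure_Q_Ioi: "measure Q {a<..} = j (surv M Z a)"
proof -
  interpret finite_measure Q by (rule finite_measure_Q)
  have "measure Q {a<..} = measure Q (space Q) - measure Q {..a}"
    using finite_measure_compl[of "{..a}"] by (simp add: Compl_eq_Diff_UNIV[symmetric] not_le)
  also have "measure Q {..a} = Q_cdf a"
    unfolding distortion_measure_def by (rule measure_interval_measure_Iic[OF Q_cdf_props(1-3)])
  finally show ?thesis using measure_Q_UNIV by simp
qed

lemma measure_Q_Ioc: "a \<le> c \<Longrightarrow> measure Q {a<..c} = j (surv M Z a) - j (surv M Z c)"
  unfolding distortion_measure_def
  using measure_interval_measure_Ioc[OF _ Q_cdf_mono Q_cdf_right_continuous, of a c] by simp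

lemma measure_Q_upper_level:
  assumes "continuous_on UNIV g" "mono g"
  shows "measure Q {x. t < g x} = j (surv M (\<lambda>\<omega>. g (Z \<omega>)) t)"
proof (cases rule: upper_level_set_mono_continuous[OF assms, of t])
  case 1
  then have "surv M (\<lambda>\<omega>. g (Z \<omega>)) t = 1"
    unfolding surv_def using prob_space by (auto simp: set_eq_iff)
  then show ?thesis using 1 measure_Q_UNIV by simp
next
  case 2
  then have "surv M (\<lambda>\<omega>. g (Z \<omega>)) t = 0"
    unfolding surv_def by (auto simp: set_eq_iff)
  then show ?thesis using 2 j_0 by simp
next
  case (3 a)
  then have "surv M (\<lambda>\<omega>. g (Z \<omega>)) t = surv M Z a"
    unfolding surv_def by (auto simp: set_eq_iff intro: arg_cong[where f = "measure M"])
  then show ?thesis using 3 measure_Q_Ioi by simp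
qed

context
  fixes g :: "real \<Rightarrow> real"
  assumes g_continuous: "continuous_on UNIV g" and g_mono: "mono g"
    and g_finite: "rho_finite M j (\<lambda>\<omega>. g (Z \<omega>))"
begin

private lemma g_borel: "g \<in> borel_measurable borel"
  using g_continuous by (rule borel_measurable_continuous_onI)

private lemma g_measurable: "g \<in> borel_measurable Q"
  using g_borel by simp

lemma integral_Q_pos_part:
  "integrable Q (\<lambda>x. max (g x) 0)" "(\<integral>x. max (g x) 0 \<partial>Q) = (LBINT t:{0<..}. j (surv M (\<lambda>\<omega>. g (Z \<omega>)) t))"
proof -
  interpret finite_measure Q by (rule finite_measure_Q)
  have int: "set_integrable lborel {0<..} (\<lambda>t. j (surv M (\<lambda>\<omega>. g (Z \<omega>)) t))"
    using g_finite by (simp add: rho_finite_def)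
  have nonneg: "0 \<le> (LBINT t:{0<..}. j (surv M (\<lambda>\<omega>. g (Z \<omega>)) t))"
    unfolding set_lebesgue_integral_def
    by (intro integral_nonneg_AE AE_I2) (auto simp: j_surv_nonneg split: split_indicator)
  have "(\<integral>\<^sup>+x. ennreal (max (g x) 0) \<partial>Q) = (\<integral>\<^sup>+t. indicator {0<..} t * emeasure Q {x. t < g x} \<partial>lborel)"
    using nn_integral_pos_part_eq_layers[OF sigma_finite_measure g_measurable] by simp
  also have "\<dots> = (\<integral>\<^sup>+t. ennreal (indicator {0<..} t *\<^sub>R j (surv M (\<lambda>\<omega>. g (Z \<omega>)) t)) \<partial>lborel)"
    by (intro nn_integral_cong)
      (auto simp: emeasure_eq_measure measure_Q_upper_level[OF g_continuous g_mono] split: split_indicator)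
  also have "\<dots> = ennreal (LBINT t:{0<..}. j (surv M (\<lambda>\<omega>. g (Z \<omega>)) t))"
    using int unfolding set_integrable_def set_lebesgue_integral_def
    by (intro nn_integral_eq_integral AE_I2) (auto simp: j_surv_nonneg split: split_indicator)
  finally show "integrable Q (\<lambda>x. max (g x) 0)" "(\<integral>x. max (g x) 0 \<partial>Q) = (LBINT t:{0<..}. j (surv M (\<lambda>\<omega>. g (Z \<omega>)) t))"
    using nn_integral_eq_integrable[of "\<lambda>x. max (g x) 0" Q] nonneg g_borel by auto
qed

lemma integral_Q_neg_part:
  "integrable Q (\<lambda>x. max (- g x) 0)" "(\<integral>x. max (- g x) 0 \<partial>Q) = (LBINT t:{..0}. j 1 - j (surv M (\<lambda>\<omega>. g (Z \<omega>)) t))"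
proof -
  interpret finite_measure Q by (rule finite_measure_Q)
  from g_finite have "set_integrable lborel {..0} (\<lambda>t. j (surv M (\<lambda>\<omega>. g (Z \<omega>)) t) - j 1)"
    by (simp add: rho_finite_def)
  from integrable_minus[OF this[unfolded set_integrable_def]]
  have int: "set_integrable lborel {..0} (\<lambda>t. j 1 - j (surv M (\<lambda>\<omega>. g (Z \<omega>)) t))"
    by (simp add: set_integrable_def algebra_simps)
  have nonneg: "0 \<le> (LBINT t:{..0}. j 1 - j (surv M (\<lambda>\<omega>. g (Z \<omega>)) t))"
    unfolding set_lebesgue_integral_def
    by (intro integral_nonneg_AE AE_I2) (auto simp: j_surv_le_j1 split: split_indicator)
  have lower: "emeasure Q {x. g x \<le> t} = ennreal (j 1 - j (surv M (\<lambda>\<omega>. g (Z \<omega>)) t))" for t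
  proof -
    have "{x. g x \<le> t} = space Q - {x. t < g x}" by auto
    moreover have "{x. t < g x} \<in> sets Q"
      using g_borel by simp
    ultimately have "measure Q {x. g x \<le> t} = measure Q (space Q) - measure Q {x. t < g x}"
      using finite_measure_compl[of "{x. t < g x}"] by simp
    then show ?thesis
      using measure_Q_upper_level[OF g_continuous g_mono] measure_Q_UNIV by (simp add: emeasure_eq_measure)
  qed
  have "(\<integral>\<^sup>+x. ennreal (max (- g x) 0) \<partial>Q) = (\<integral>\<^sup>+t. indicator {..0} t * emeasure Q {x. g x \<le> t} \<partial>lborel)"
    using nn_integral_neg_part_eq_layers[OF sigma_finite_measure g_measurable] by simp
  also have "\<dots> = (\<integral>\<^sup>+t. ennreal (indicator {..0} t *\<^sub>R (j 1 - j (surv M (\<lambda>\<omega>. g (Z \<omega>)) t))) \<partial>lborel)"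
    by (intro nn_integral_cong) (auto simp: lower split: split_indicator)
  also have "\<dots> = ennreal (LBINT t:{..0}. j 1 - j (surv M (\<lambda>\<omega>. g (Z \<omega>)) t))"
    using int unfolding set_integrable_def set_lebesgue_integral_def
    by (intro nn_integral_eq_integral AE_I2) (auto simp: j_surv_le_j1 split: split_indicator)
  finally show "integrable Q (\<lambda>x. max (- g x) 0)" "(\<integral>x. max (- g x) 0 \<partial>Q) = (LBINT t:{..0}. j 1 - j (surv M (\<lambda>\<omega>. g (Z \<omega>)) t))"
    using nn_integral_eq_integrable[of "\<lambda>x. max (- g x) 0" Q] nonneg g_borel by auto
qed

theorem integrable_Q: "integrable Q g"
  and rho_eq_integral_Q: "rho M j (\<lambda>\<omega>. g (Z \<omega>)) = (\<integral>x. g x \<partial>Q)"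
proof -
  have g: "g = (\<lambda>x. max (g x) 0 - max (- g x) 0)" by (auto simp: fun_eq_iff max_def)
  show "integrable Q g"
    by (subst g) (intro Bochner_Integration.integrable_diff integral_Q_pos_part integral_Q_neg_part)
  have "set_integrable lborel {..0} (\<lambda>t. j (surv M (\<lambda>\<omega>. g (Z \<omega>)) t) - j 1)"
    using g_finite by (simp add: rho_finite_def)
  from set_integral_uminus[OF this]
  show "rho M j (\<lambda>\<omega>. g (Z \<omega>)) = (\<integral>x. g x \<partial>Q)"
    by (subst g) (simp add: Bochner_Integration.integral_diff integral_Q_pos_part integral_Q_neg_part rho_def)
qed

end

lemma null_sets_Q_open:
  assumes "open U" and null: "measure M {\<omega>\<in>space M. Z \<omega> \<in> U} = 0"
  shows "U \<in> null_sets Q"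
proof -
  interpret Q: finite_measure Q by (rule finite_measure_Q)
  obtain C where C: "countable C" "\<And>a c. (a, c) \<in> C \<Longrightarrow> a \<le> c \<and> {a<..c} \<subseteq> U"
    and U: "U = (\<Union>(a, c)\<in>C. {a<..c})"
    using open_real_countable_Union_Ioc[OF assms(1)] by blast
  have "{a<..c} \<in> null_sets Q" if "(a, c) \<in> C" for a c
  proof -
    have "{\<omega>\<in>space M. Z \<omega> \<in> U} \<in> events"
      using measurable_sets[OF Z_measurable borel_open[OF assms(1)]] by (simp add: Int_def conj_commute)
    then have "measure M {\<omega>\<in>space M. Z \<omega> \<in> {a<..c}} \<le> measure M {\<omega>\<in>space M. Z \<omega> \<in> U}"
      using C(2)[OF that] by (intro finite_measure_mono) auto
    then have "measure M {\<omega>\<in>space M. Z \<omega> \<in> {a<..c}} = 0"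
      using null measure_nonneg[of M "{\<omega>\<in>space M. Z \<omega> \<in> {a<..c}}"] by linarith
    then have "surv M Z a = surv M Z c"
      using surv_diff[OF Z_measurable, of a c] C(2)[OF that] by simp
    then show ?thesis
      using measure_Q_Ioc[of a c] C(2)[OF that] by (simp add: Q.emeasure_eq_measure null_sets_def)
  qed
  then show ?thesis unfolding U using C(1) by (intro null_sets_UN') auto
qed

lemma null_sets_open_preimage:
  assumes j_strict: "strict_mono_on {0..1} j" and "open U" "U \<in> null_sets Q"
  shows "{\<omega>\<in>space M. Z \<omega> \<in> U} \<in> null_sets M"
proof -
  interpret Q: finite_measure Q by (rule finite_measure_Q)
  obtain C where C: "countable C" "\<And>a c. (a, c) \<in> C \<Longrightarrow> a \<le> c \<and> {a<..c} \<subseteq> U"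
    and U: "U = (\<Union>(a, c)\<in>C. {a<..c})"
    using open_real_countable_Union_Ioc[OF assms(2)] by blast
  have "{\<omega>\<in>space M. Z \<omega> \<in> {a<..c}} \<in> null_sets M" if "(a, c) \<in> C" for a c
  proof -
    have "{a<..c} \<in> null_sets Q"
      by (rule null_sets_subset[OF assms(3)]) (use C(2)[OF that] in auto)
    then have "j (surv M Z a) = j (surv M Z c)"
      using measure_Q_Ioc[of a c] C(2)[OF that] by (simp add: Q.emeasure_eq_measure null_sets_def)
    from strict_mono_on_eqD[OF j_strict this surv_in_01 surv_in_01]
    have "surv M Z a = surv M Z c" by simp
    then have "measure M {\<omega>\<in>space M. Z \<omega> \<in> {a<..c}} = 0"
      using surv_diff[OF Z_measurable, of a c] C(2)[OF that] by simp
    then show ?thesis by (simp add: emeasure_eq_measure null_sets_def)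
  qed
  moreover have "{\<omega>\<in>space M. Z \<omega> \<in> U} = (\<Union>(a, c)\<in>C. {\<omega>\<in>space M. Z \<omega> \<in> {a<..c}})"
    unfolding U by blast
  ultimately show ?thesis using C(1) by (auto intro: null_sets_UN')
qed

lemma AE_Q_if_AE:
  fixes f g :: "real \<Rightarrow> real"
  assumes "continuous_on UNIV f" "continuous_on UNIV g" and ae: "AE \<omega> in M. f (Z \<omega>) = g (Z \<omega>)"
  shows "AE x in Q. f x = g x"
proof -
  have "open {x. f x \<noteq> g x}" by (rule open_Collect_neq[OF assms(1,2)])
  moreover have "{\<omega>\<in>space M. Z \<omega> \<in> {x. f x \<noteq> g x}} \<in> null_sets M"
  proof -
    have N: "{\<omega>\<in>space M. Z \<omega> \<in> {x. f x \<noteq> g x}} \<in> events"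
      using measurable_sets[OF Z_measurable borel_open[OF calculation]] by (simp add: Int_def conj_commute)
    show ?thesis unfolding AE_iff_null_sets[OF N] using ae by eventually_elim auto
  qed
  ultimately have "{x. f x \<noteq> g x} \<in> null_sets Q"
    by (intro null_sets_Q_open) (auto simp: null_sets_def emeasure_eq_measure)
  then show ?thesis by (rule AE_not_in[THEN AE_mp]) auto
qed

lemma AE_if_AE_Q:
  fixes f g :: "real \<Rightarrow> real"
  assumes "strict_mono_on {0..1} j" "continuous_on UNIV f" "continuous_on UNIV g"
    and ae: "AE x in Q. f x = g x"
  shows "AE \<omega> in M. f (Z \<omega>) = g (Z \<omega>)"
proof -
  have "open {x. f x \<noteq> g x}" by (rule open_Collect_neq[OF assms(2,3)])
  moreover have "{x. f x \<noteq> g x} \<in> null_sets Q"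
    using AE_iff_null_sets[of "{x. f x \<noteq> g x}" Q] ae borel_open[OF calculation] by simp
  ultimately have "{\<omega>\<in>space M. Z \<omega> \<in> {x. f x \<noteq> g x}} \<in> null_sets M"
    using null_sets_open_preimage[OF assms(1)] by blast
  then show ?thesis by (rule AE_not_in[THEN AE_mp]) auto
qed

lemma integral_Q_shift:
  fixes f g :: "real \<Rightarrow> real"
  assumes f: "integrable Q f" "continuous_on UNIV f" and g: "continuous_on UNIV g"
    and ae: "AE \<omega> in M. g (Z \<omega>) = f (Z \<omega>) + c"
  shows "(\<integral>x. g x \<partial>Q) = (\<integral>x. f x \<partial>Q) + c * j 1"
proof -
  have [measurable]: "f \<in> borel_measurable borel" "g \<in> borel_measurable borel"
    using f(2) g by (simp_all add: borel_measurable_continuous_onI)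
  have "AE x in Q. g x = f x + c"
    using f(2) g ae by (intro AE_Q_if_AE) (auto intro!: continuous_intros)
  then have "(\<integral>x. g x \<partial>Q) = (\<integral>x. f x + c \<partial>Q)"
    by (rule integral_cong_AE[rotated 2]) measurable
  also have "\<dots> = (\<integral>x. f x \<partial>Q) + (\<integral>x. c \<partial>Q)"
    by (rule Bochner_Integration.integral_add[OF f(1) finite_measure.integrable_const[OF finite_measure_Q]])
  also have "(\<integral>x. c \<partial>Q) = c * j 1"
    using measure_Q_UNIV by simp
  finally show ?thesis .
qed

lemma integral_Q_extend_zero_tendsto:
  assumes id: "integrable Q (extend_zero (\<lambda>x. x))"
    and f: "\<And>n. f n \<in> Ic" and L: "L \<in> Ic" and lim: "\<And>x. 0 \<le> x \<Longrightarrow> (\<lambda>n. f n x) \<longlonglongrightarrow> L x"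
  shows "(\<lambda>n. \<integral>x. extend_zero (f n) x \<partial>Q) \<longlonglongrightarrow> (\<integral>x. extend_zero L x \<partial>Q)"
proof (rule integral_dominated_convergence[OF _ _ id])
  show "extend_zero L \<in> borel_measurable Q"
    using borel_measurable_continuous_onI[OF continuous_on_extend_zero[OF L]] by simp
  show "extend_zero (f n) \<in> borel_measurable Q" for n
    using borel_measurable_continuous_onI[OF continuous_on_extend_zero[OF f]] by simp
  show "AE x in Q. (\<lambda>n. extend_zero (f n) x) \<longlonglongrightarrow> extend_zero L x"
    using lim by (intro AE_I2) (simp add: extend_zero_def)
  show "AE x in Q. norm (extend_zero (f n) x) \<le> extend_zero (\<lambda>x. x) x" for n
    using extend_zero_bounds[OF f] by (intro AE_I2) (simp add: extend_zero_def)
qed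

end

section \<open>The insurance problem\<close>

lemma concave_on_ge_min:
  fixes k :: "real \<Rightarrow> real"
  assumes k: "concave_on S k" and S: "x \<in> S" "z \<in> S" and y: "x \<le> y" "y \<le> z"
  shows "min (k x) (k z) \<le> k y"
proof (cases "x = z")
  case False
  define t where "t = (y - x) / (z - x)"
  have t: "0 \<le> t" "t \<le> 1" using y False by (auto simp: t_def field_simps)
  have "t * (z - x) = y - x" using False by (simp add: t_def)
  then have "(1 - t) *\<^sub>R x + t *\<^sub>R z = y" by (simp add: algebra_simps)
  moreover have "(1 - t) * k x + t * k z \<le> k ((1 - t) *\<^sub>R x + t *\<^sub>R z)"
    by (rule concave_onD[OF k t S])
  moreover have "(1 - t) * min (k x) (k z) + t * min (k x) (k z) \<le> (1 - t) * k x + t * k z"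
    using t by (intro add_mono mult_left_mono) auto
  ultimately show ?thesis by (simp add: algebra_simps)
qed (use y in auto)

lemma strictly_concave_on_midpoint:
  assumes "strictly_concave_on UNIV f" "x \<noteq> y"
  shows "(f x + f y) / 2 < f ((x + y) / 2)"
proof -
  have "1 / 2 * f x + (1 - 1 / 2) * f y < f (1 / 2 * x + (1 - 1 / 2) * y)"
    using assms(1)[unfolded strictly_concave_on_def, rule_format, of x y "1 / 2"] assms(2) by simp
  then show ?thesis by (simp add: field_simps)
qed

definition rising_part :: "real \<Rightarrow> (real \<Rightarrow> real) \<Rightarrow> real \<Rightarrow> real" where
  "rising_part p k x = k (min x p)"

definition falling_part :: "real \<Rightarrow> (real \<Rightarrow> real) \<Rightarrow> real \<Rightarrow> real" where
  "falling_part p k x = k p - k (max x p)"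

lemma rising_part_eq: "rising_part p k = (\<lambda>x. k x + falling_part p k x)"
  by (auto simp: rising_part_def falling_part_def fun_eq_iff min_def max_def)

context
  fixes k :: "real \<Rightarrow> real" and p :: real
  assumes k: "concave_on {0..1} k" and p: "p \<in> {0..1}" "\<And>x. x \<in> {0..1} \<Longrightarrow> k x \<le> k p"
begin

lemma mono_on_rising_part: "mono_on {0..1} (rising_part p k)"
proof (rule mono_onI)
  fix x y :: real assume "x \<in> {0..1}" "y \<in> {0..1}" "x \<le> y"
  then show "rising_part p k x \<le> rising_part p k y"
    using concave_on_ge_min[OF k, of "min x p" p "min y p"] p by (auto simp: rising_part_def)
qed

lemma mono_on_falling_part: "mono_on {0..1} (falling_part p k)"
proof (rule mono_onI)
  fix x y :: real assume "x \<in> {0..1}" "y \<in> {0..1}" "x \<le> y"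
  then show "falling_part p k x \<le> falling_part p k y"
    using concave_on_ge_min[OF k, of p "max y p" "max x p"] p by (auto simp: falling_part_def)
qed

end

lemma continuous_on_rising_part:
  "continuous_on {0..1} k \<Longrightarrow> p \<in> {0..1} \<Longrightarrow> continuous_on {0..1} (rising_part p k)"
  unfolding rising_part_def
  by (rule continuous_on_compose2[of _ k _ "\<lambda>x. min x p"]) (auto intro!: continuous_intros)

lemma continuous_on_falling_part:
  "continuous_on {0..1} k \<Longrightarrow> p \<in> {0..1} \<Longrightarrow> continuous_on {0..1} (falling_part p k)"
  unfolding falling_part_def
  by (intro continuous_intros continuous_on_compose2[of _ k _ "\<lambda>x. max x p"]) (auto intro!: continuous_intros)

locale indemnity_problem = prob_space M for M :: "'a measure" +
  fixes X :: "'a \<Rightarrow> real" and \<theta> w :: real and k b u :: "real \<Rightarrow> real"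
  assumes X_measurable [measurable]: "X \<in> borel_measurable M"
    and X_nonneg: "\<And>\<omega>. \<omega> \<in> space M \<Longrightarrow> 0 \<le> X \<omega>" and X_integrable: "integrable M X"
    and loading: "-1 < \<theta>"
    and k_continuous: "continuous_on {0..1} k" and k_concave: "concave_on {0..1} k"
    and k_nonneg: "\<And>p. p \<in> {0..1} \<Longrightarrow> 0 \<le> k p" and k_0: "k 0 = 0" and k_1: "k 1 = 0"
    and u_continuous: "continuous_on UNIV u" and u_strict_mono: "strict_mono u"
    and u_strictly_concave: "strictly_concave_on UNIV u"
    and b_continuous: "continuous_on {0..1} b" and b_strict_mono: "strict_mono_on {0..1} b"
    and b_0: "b 0 = 0" and b_1: "b 1 = 1"
    and k_finite: "\<And>I. I \<in> Ic \<Longrightarrow> rho_finite M k (\<lambda>\<omega>. I (X \<omega>))"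
    and b_finite: "\<And>I. I \<in> Ic \<Longrightarrow>
      rho_finite M b (\<lambda>\<omega>. u (w - X \<omega> + I (X \<omega>) - premium M \<theta> k (\<lambda>\<omega>'. I (X \<omega>'))))"
begin

abbreviation "prem I \<equiv> premium M \<theta> k (\<lambda>\<omega>. I (X \<omega>))"
abbreviation "V \<equiv> objective M \<theta> k b w u X"

lemma extend_zero_X: "\<omega> \<in> space M \<Longrightarrow> extend_zero I (X \<omega>) = I (X \<omega>)"
  using X_nonneg by simp

lemma measurable_indemnity [measurable]:
  assumes "I \<in> Ic"
  shows "(\<lambda>\<omega>. I (X \<omega>)) \<in> borel_measurable M"
proof -
  have "(\<lambda>\<omega>. extend_zero I (X \<omega>)) \<in> borel_measurable M"
    using borel_measurable_continuous_onI[OF continuous_on_extend_zero[OF assms]] by measurable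
  then show ?thesis by (rule measurable_cong[THEN iffD1, rotated]) (simp add: extend_zero_X)
qed

lemma integrable_indemnity:
  assumes "I \<in> Ic"
  shows "integrable M (\<lambda>\<omega>. I (X \<omega>))"
proof (rule Bochner_Integration.integrable_bound[OF X_integrable measurable_indemnity[OF assms]])
  show "AE \<omega> in M. norm (I (X \<omega>)) \<le> norm (X \<omega>)"
  proof (rule AE_I2)
    fix \<omega> assume "\<omega> \<in> space M"
    from IcD(1,2)[OF assms X_nonneg[OF this] order_refl]
    show "norm (I (X \<omega>)) \<le> norm (X \<omega>)" by simp
  qed
qed

definition peak :: real where
  "peak = (SOME p. p \<in> {0<..1} \<and> (\<forall>x\<in>{0..1}. k x \<le> k p))"

lemma peak: "peak \<in> {0<..1}" "\<And>x. x \<in> {0..1} \<Longrightarrow> k x \<le> k peak"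
proof -
  obtain p where p: "p \<in> {0..1}" "\<forall>x\<in>{0..1}. k x \<le> k p"
    using continuous_attains_sup[OF compact_Icc _ k_continuous] by auto
  have "\<exists>p. p \<in> {0<..1} \<and> (\<forall>x\<in>{0..1}. k x \<le> k p)"
  proof (cases "p = 0")
    case True
    have "k x \<le> k 1" if "x \<in> {0..1}" for x
      using p(2) that True k_0 k_nonneg[of 1] by fastforce
    then show ?thesis by (intro exI[of _ 1]) auto
  next
    case False
    then show ?thesis using p by (intro exI[of _ p]) auto
  qed
  from someI_ex[OF this] show "peak \<in> {0<..1}" "\<And>x. x \<in> {0..1} \<Longrightarrow> k x \<le> k peak"
    unfolding peak_def by auto
qed

abbreviation "k_up \<equiv> rising_part peak k"
abbreviation "k_down \<equiv> falling_part peak k"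

text \<open>A positive peak makes \<open>k_down\<close> vanish on \<open>[0, peak]\<close>, hence \<open>k_down (S t) = 0\<close> for large
  \<open>t\<close>; this is what makes \<open>rho_finite_k_down\<close> hold.\<close>

lemma k_down_bounds: "x \<in> {0..1} \<Longrightarrow> 0 \<le> k_down x \<and> k_down x \<le> k peak"
  using peak k_nonneg[of "max x peak"] by (auto simp: falling_part_def)

sublocale up: distortion M X k_up
proof
  show "continuous_on {0..1} k_up"
    using peak(1) by (intro continuous_on_rising_part k_continuous) auto
  show "mono_on {0..1} k_up"
    using peak by (intro mono_on_rising_part k_concave) auto
  show "k_up 0 = 0"
    using peak(1) k_0 by (simp add: rising_part_def)
qed (rule X_measurable)

sublocale down: distortion M X k_down
proof
  show "continuous_on {0..1} k_down"
    using peak(1) by (intro continuous_on_falling_part k_continuous) auto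
  show "mono_on {0..1} k_down"
    using peak by (intro mono_on_falling_part k_concave) auto
  show "k_down 0 = 0"
    using peak(1) by (simp add: falling_part_def)
qed (rule X_measurable)

sublocale loss: distortion M "\<lambda>\<omega>. - X \<omega>" b
proof
  show "mono_on {0..1} b" by (rule strict_mono_on_imp_mono_on[OF b_strict_mono])
qed (use b_continuous b_0 in auto)

lemma surv_indemnity_neg:
  assumes "I \<in> Ic" "t < 0"
  shows "surv M (\<lambda>\<omega>. I (X \<omega>)) t = 1"
proof -
  have "{\<omega>\<in>space M. t < I (X \<omega>)} = space M"
    using IcD(1)[OF assms(1) X_nonneg order_refl] assms(2) by fastforce
  then show ?thesis using prob_space by (simp add: surv_def)
qed

lemma rho_finite_k_down:
  assumes I: "I \<in> Ic"
  shows "rho_finite M k_down (\<lambda>\<omega>. I (X \<omega>))"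
proof -
  let ?S = "surv M (\<lambda>\<omega>. I (X \<omega>))"
  have [measurable]: "(\<lambda>t. k_down (?S t)) \<in> borel_measurable borel"
    by (rule borel_measurable_distorted_surv[OF down.j_mono measurable_indemnity[OF I]])
  have "eventually (\<lambda>t. surv M X t < peak) at_top"
    using peak(1) by (intro order_tendstoD(2)[OF surv_tendsto_at_top[OF X_measurable]]) auto
  then obtain T where T: "\<And>t. T \<le> t \<Longrightarrow> surv M X t < peak"
    by (auto simp: eventually_at_top_linorder)
  have vanish: "k_down (?S t) = 0" if "T \<le> t" for t
  proof -
    have "?S t \<le> surv M X t"
      by (rule surv_mono[OF X_measurable]) (use IcD(2)[OF I X_nonneg order_refl] in auto)
    then show ?thesis using T[OF that] by (simp add: falling_part_def max_def)
  qed
  have "set_integrable lborel {..0} (\<lambda>t. k_down (?S t) - k_down 1)"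
    unfolding set_integrable_def
  proof (rule integrable_cong_AE_imp[OF integrable_zero])
    show "AE t in lborel. 0 = indicator {..0} t *\<^sub>R (k_down (?S t) - k_down 1)"
      using AE_lborel_singleton[of 0]
      by eventually_elim (auto simp: surv_indemnity_neg[OF I] split: split_indicator)
  qed measurable
  moreover have "set_integrable lborel {0<..} (\<lambda>t. k_down (?S t))"
    unfolding set_integrable_def
  proof (rule Bochner_Integration.integrable_bound)
    show "integrable lborel (\<lambda>t. k peak * indicator {0..max T 0} t)"
      by (intro integrable_mult_right) (simp add: integrable_indicator_iff)
    show "AE t in lborel. norm (indicator {0<..} t *\<^sub>R k_down (?S t)) \<le> norm (k peak * indicator {0..max T 0} t)"
    proof (rule AE_I2)
      fix t :: real
      show "norm (indicator {0<..} t *\<^sub>R k_down (?S t)) \<le> norm (k peak * indicator {0..max T 0} t)"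
        using k_down_bounds[OF down.surv_in_01] vanish[of t] k_nonneg[of peak] peak(1)
        by (cases "t \<le> max T 0") (auto split: split_indicator)
    qed
  qed measurable
  ultimately show ?thesis by (simp add: rho_finite_def)
qed

lemma rho_k_split:
  assumes "I \<in> Ic"
  shows "rho_finite M k_up (\<lambda>\<omega>. I (X \<omega>))"
    and "rho M k (\<lambda>\<omega>. I (X \<omega>)) = rho M k_up (\<lambda>\<omega>. I (X \<omega>)) - rho M k_down (\<lambda>\<omega>. I (X \<omega>))"
  using rho_add[OF k_finite[OF assms] rho_finite_k_down[OF assms]] by (simp_all add: rising_part_eq)

lemma premium_eq:
  assumes I: "I \<in> Ic"
  shows "integrable up.Q (extend_zero I)" "integrable down.Q (extend_zero I)"
    and "prem I = (1 + \<theta>) * (\<integral>\<omega>. I (X \<omega>) \<partial>M) +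
      ((\<integral>x. extend_zero I x \<partial>up.Q) - (\<integral>x. extend_zero I x \<partial>down.Q))"
proof -
  note eq = rho_cong[of M "\<lambda>\<omega>. extend_zero I (X \<omega>)" "\<lambda>\<omega>. I (X \<omega>)", OF extend_zero_X]
  note g = continuous_on_extend_zero[OF I] mono_extend_zero[OF I]
  have up: "rho_finite M k_up (\<lambda>\<omega>. extend_zero I (X \<omega>))"
    using rho_k_split(1)[OF I] eq(2) by simp
  have down: "rho_finite M k_down (\<lambda>\<omega>. extend_zero I (X \<omega>))"
    using rho_finite_k_down[OF I] eq(2) by simp
  show "integrable up.Q (extend_zero I)" by (rule up.integrable_Q[OF g up])
  show "integrable down.Q (extend_zero I)" by (rule down.integrable_Q[OF g down])
  show "prem I = (1 + \<theta>) * (\<integral>\<omega>. I (X \<omega>) \<partial>M) +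
      ((\<integral>x. extend_zero I x \<partial>up.Q) - (\<integral>x. extend_zero I x \<partial>down.Q))"
    using up.rho_eq_integral_Q[OF g up] down.rho_eq_integral_Q[OF g down] eq(1)
    by (simp add: premium_def rho_k_split(2)[OF I])
qed

lemma premium_convex_comb:
  assumes I1: "I1 \<in> Ic" and I2: "I2 \<in> Ic" and t: "0 \<le> t" "t \<le> 1"
  shows "prem (\<lambda>x. t * I1 x + (1 - t) * I2 x) = t * prem I1 + (1 - t) * prem I2"
proof -
  have I: "(\<lambda>x. t * I1 x + (1 - t) * I2 x) \<in> Ic" by (rule Ic_convex_comb[OF assms])
  have ext: "extend_zero (\<lambda>x. t * I1 x + (1 - t) * I2 x) = (\<lambda>x. t * extend_zero I1 x + (1 - t) * extend_zero I2 x)"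
    by (simp add: extend_zero_def fun_eq_iff)
  show ?thesis
    unfolding premium_eq(3)[OF I] premium_eq(3)[OF I1] premium_eq(3)[OF I2] ext
    using integrable_indemnity[OF I1] integrable_indemnity[OF I2] premium_eq(1,2)[OF I1] premium_eq(1,2)[OF I2]
    by (simp add: Bochner_Integration.integral_add algebra_simps)
qed

lemma premium_shift:
  assumes I: "I \<in> Ic" and J: "J \<in> Ic" and ae: "AE \<omega> in M. J (X \<omega>) = I (X \<omega>) + c"
  shows "prem J = prem I + (1 + \<theta>) * c"
proof -
  have ae': "AE \<omega> in M. extend_zero J (X \<omega>) = extend_zero I (X \<omega>) + c"
    using ae AE_space by eventually_elim (simp add: extend_zero_X)
  note shift = continuous_on_extend_zero[OF I] continuous_on_extend_zero[OF J] ae'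
  have "(\<integral>\<omega>. J (X \<omega>) \<partial>M) = (\<integral>\<omega>. I (X \<omega>) + c \<partial>M)"
    by (rule integral_cong_AE) (use ae I J in auto)
  also have "\<dots> = (\<integral>\<omega>. I (X \<omega>) \<partial>M) + c"
    using integrable_indemnity[OF I] by (simp add: Bochner_Integration.integral_add prob_space)
  \<comment> \<open>The shift adds \<open>c * (k_up 1 - k_down 1) = c * k 1 = 0\<close> to \<open>\<rho>\<^sub>k\<close>.\<close>
  finally show ?thesis
    unfolding premium_eq(3)[OF I] premium_eq(3)[OF J]
    using up.integral_Q_shift[OF premium_eq(1)[OF I] shift] down.integral_Q_shift[OF premium_eq(2)[OF I] shift] k_1
    by (simp add: rising_part_eq algebra_simps)
qed

lemma premium_tendsto:
  assumes f: "\<And>n. f n \<in> Ic" and L: "L \<in> Ic" and lim: "\<And>x. 0 \<le> x \<Longrightarrow> (\<lambda>n. f n x) \<longlonglongrightarrow> L x"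
  shows "(\<lambda>n. prem (f n)) \<longlonglongrightarrow> prem L"
proof -
  have "(\<lambda>n. \<integral>\<omega>. f n (X \<omega>) \<partial>M) \<longlonglongrightarrow> (\<integral>\<omega>. L (X \<omega>) \<partial>M)"
  proof (rule integral_dominated_convergence[OF measurable_indemnity[OF L] measurable_indemnity[OF f] X_integrable])
    show "AE \<omega> in M. (\<lambda>n. f n (X \<omega>)) \<longlonglongrightarrow> L (X \<omega>)"
      using X_nonneg lim by (intro AE_I2) auto
    show "AE \<omega> in M. norm (f n (X \<omega>)) \<le> X \<omega>" for n
    proof (rule AE_I2)
      fix \<omega> assume "\<omega> \<in> space M"
      from IcD(1,2)[OF f X_nonneg[OF this] order_refl]
      show "norm (f n (X \<omega>)) \<le> X \<omega>" by simp
    qed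
  qed
  then show ?thesis
    unfolding premium_eq(3)[OF L] premium_eq(3)[OF f]
    by (intro tendsto_intros up.integral_Q_extend_zero_tendsto down.integral_Q_extend_zero_tendsto
        premium_eq(1,2)[OF Ic_id] f L lim)
qed

lemma premium_nonneg:
  assumes "I \<in> Ic"
  shows "0 \<le> prem I"
proof -
  have "0 \<le> (\<integral>\<omega>. I (X \<omega>) \<partial>M)"
    by (rule integral_nonneg_AE) (use IcD(1)[OF assms X_nonneg order_refl] in \<open>auto intro!: AE_I2\<close>)
  moreover have "0 \<le> rho M k (\<lambda>\<omega>. I (X \<omega>))"
    unfolding rho_def set_lebesgue_integral_def
    by (intro add_nonneg_nonneg integral_nonneg_AE AE_I2)
      (use k_nonneg down.surv_in_01 k_1 in \<open>auto split: split_indicator\<close>)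
  ultimately show ?thesis using loading by (simp add: premium_def)
qed

definition wealth :: "(real \<Rightarrow> real) \<Rightarrow> real \<Rightarrow> real" where
  "wealth I x = w - x + I x - prem I"

text \<open>The final utility as a function of \<open>z = -X\<close>, in which it is nondecreasing, so that
  \<open>\<rho>\<^sub>b\<close> of it is an integral against the distortion measure of \<open>-X\<close>.\<close>

definition utility :: "(real \<Rightarrow> real) \<Rightarrow> real \<Rightarrow> real" where
  "utility I z = u (wealth I (max (- z) 0))"

lemma utility_neg_X: "\<omega> \<in> space M \<Longrightarrow> utility I (- X \<omega>) = u (wealth I (X \<omega>))"
  using X_nonneg[of \<omega>] by (simp add: utility_def)

lemma continuous_on_utility:
  assumes "I \<in> Ic"
  shows "continuous_on UNIV (utility I)"
proof -
  have "utility I = (\<lambda>z. u (w - max (- z) 0 + extend_zero I (- z) - prem I))"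
    by (simp add: fun_eq_iff utility_def wealth_def extend_zero_def)
  then show ?thesis
    by (simp only:) (intro continuous_on_compose2[OF u_continuous] continuous_intros
        continuous_on_compose2[OF continuous_on_extend_zero[OF assms]], auto)
qed

lemma mono_utility:
  assumes "I \<in> Ic"
  shows "mono (utility I)"
proof (rule monoI)
  fix z z' :: real assume "z \<le> z'"
  then have "I (max (- z) 0) - I (max (- z') 0) \<le> max (- z) 0 - max (- z') 0"
    using IcD(4)[OF assms, of "max (- z') 0" "max (- z) 0"] by auto
  then show "utility I z \<le> utility I z'"
    unfolding utility_def wealth_def using u_strict_mono by (simp add: strict_mono_less_eq)
qed

lemma utility_le: "I \<in> Ic \<Longrightarrow> utility I z \<le> u w"
  using IcD(2)[of I "max (- z) 0" "max (- z) 0"] premium_nonneg[of I] u_strict_mono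
  by (simp add: utility_def wealth_def strict_mono_less_eq)

lemma wealth_midpoint:
  assumes "I1 \<in> Ic" "I2 \<in> Ic"
  shows "wealth (\<lambda>x. (I1 x + I2 x) / 2) x = (wealth I1 x + wealth I2 x) / 2"
proof -
  have "prem (\<lambda>x. (I1 x + I2 x) / 2) = prem (\<lambda>x. 1 / 2 * I1 x + (1 - 1 / 2) * I2 x)"
    by (rule arg_cong[where f = "premium M \<theta> k"]) (simp add: fun_eq_iff)
  also have "\<dots> = 1 / 2 * prem I1 + (1 - 1 / 2) * prem I2"
    by (rule premium_convex_comb[OF assms]) auto
  finally have prem_mid: "prem (\<lambda>x. (I1 x + I2 x) / 2) = 1 / 2 * prem I1 + (1 - 1 / 2) * prem I2" .
  show ?thesis unfolding wealth_def prem_mid by (simp add: field_simps)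
qed

lemma utility_midpoint:
  assumes "I1 \<in> Ic" "I2 \<in> Ic"
  shows "(utility I1 z + utility I2 z) / 2 \<le> utility (\<lambda>x. (I1 x + I2 x) / 2) z"
    and "wealth I1 (max (- z) 0) \<noteq> wealth I2 (max (- z) 0) \<Longrightarrow>
      (utility I1 z + utility I2 z) / 2 < utility (\<lambda>x. (I1 x + I2 x) / 2) z"
  using strictly_concave_on_midpoint[OF u_strictly_concave, of "wealth I1 (max (- z) 0)" "wealth I2 (max (- z) 0)"]
  by (force simp: utility_def wealth_midpoint[OF assms])+

lemma objective_eq_integral:
  assumes I: "I \<in> Ic"
  shows "integrable loss.Q (utility I)" "V I = (\<integral>z. utility I z \<partial>loss.Q)"
proof -
  note eq = rho_cong[of M "\<lambda>\<omega>. utility I (- X \<omega>)" "\<lambda>\<omega>. u (w - X \<omega> + I (X \<omega>) - prem I)",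
    OF utility_neg_X[unfolded wealth_def]]
  have "rho_finite M b (\<lambda>\<omega>. utility I (- X \<omega>))"
    using b_finite[OF I] eq(2) by simp
  note rep = loss.integrable_Q[OF continuous_on_utility[OF I] mono_utility[OF I] this]
    loss.rho_eq_integral_Q[OF continuous_on_utility[OF I] mono_utility[OF I] this]
  show "integrable loss.Q (utility I)" by (rule rep(1))
  show "V I = (\<integral>z. utility I z \<partial>loss.Q)"
    using rep(2) eq(1) by (simp add: objective_def)
qed

lemma measure_loss_Q: "measure loss.Q (space loss.Q) = 1"
  using loss.measure_Q_UNIV b_1 by simp

lemma objective_le: "I \<in> Ic \<Longrightarrow> V I \<le> u w"
proof -
  assume I: "I \<in> Ic"
  interpret finite_measure loss.Q by (rule loss.finite_measure_Q)
  have "V I \<le> (\<integral>z. u w \<partial>loss.Q)"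
    unfolding objective_eq_integral(2)[OF I]
    by (intro integral_mono objective_eq_integral(1)[OF I] integrable_const utility_le[OF I])
  then show ?thesis using measure_loss_Q by simp
qed

lemma utility_tendsto:
  assumes f: "\<And>n. f n \<in> Ic" and L: "L \<in> Ic" and lim: "\<And>x. 0 \<le> x \<Longrightarrow> (\<lambda>n. f n x) \<longlonglongrightarrow> L x"
  shows "(\<lambda>n. utility (f n) z) \<longlonglongrightarrow> utility L z"
  unfolding utility_def wealth_def
  by (intro continuous_on_tendsto_compose[OF u_continuous] tendsto_intros lim premium_tendsto[OF f L lim]) auto

lemma nn_integral_utility_gap:
  assumes I: "I \<in> Ic"
  shows "(\<integral>\<^sup>+z. ennreal (u w - utility I z) \<partial>loss.Q) = ennreal (u w - V I)"
proof -
  interpret finite_measure loss.Q by (rule loss.finite_measure_Q)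
  have int: "integrable loss.Q (\<lambda>z. u w - utility I z)"
    by (intro Bochner_Integration.integrable_diff integrable_const objective_eq_integral(1)[OF I])
  have "(\<integral>z. u w - utility I z \<partial>loss.Q) = u w - V I"
    using objective_eq_integral[OF I] measure_loss_Q by (simp add: Bochner_Integration.integral_diff)
  with nn_integral_eq_integral[OF int] utility_le[OF I] show ?thesis by simp
qed

text \<open>Fatou's lemma applied to the nonnegative gaps \<open>u w - utility I\<close>.\<close>

lemma objective_upper_semicontinuous:
  assumes f: "\<And>n. f n \<in> Ic" and L: "L \<in> Ic" and lim: "\<And>x. 0 \<le> x \<Longrightarrow> (\<lambda>n. f n x) \<longlonglongrightarrow> L x"
    and V: "(\<lambda>n. V (f n)) \<longlonglongrightarrow> s"
  shows "s \<le> V L"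
proof -
  have [measurable]: "utility I \<in> borel_measurable loss.Q" if "I \<in> Ic" for I
    using borel_measurable_continuous_onI[OF continuous_on_utility[OF that]] by simp
  have "(\<integral>\<^sup>+z. liminf (\<lambda>n. ennreal (u w - utility (f n) z)) \<partial>loss.Q)
      \<le> liminf (\<lambda>n. \<integral>\<^sup>+z. ennreal (u w - utility (f n) z) \<partial>loss.Q)"
    using f by (intro nn_integral_liminf) measurable
  moreover have "liminf (\<lambda>n. ennreal (u w - utility (f n) z)) = ennreal (u w - utility L z)" for z
    by (intro lim_imp_Liminf tendsto_ennrealI tendsto_intros utility_tendsto[OF f L lim]) simp
  moreover have "liminf (\<lambda>n. \<integral>\<^sup>+z. ennreal (u w - utility (f n) z) \<partial>loss.Q) = ennreal (u w - s)"
    unfolding nn_integral_utility_gap[OF f] by (intro lim_imp_Liminf tendsto_ennrealI tendsto_intros V) simp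
  ultimately have "ennreal (u w - V L) \<le> ennreal (u w - s)"
    using nn_integral_utility_gap[OF L] by simp
  moreover have "s \<le> u w"
    by (rule LIMSEQ_le_const2[OF V]) (use objective_le[OF f] in auto)
  ultimately show ?thesis by (simp add: ennreal_le_iff)
qed

lemma exists_optimal: "\<exists>I. optimal M \<theta> k b w u X I"
proof -
  define s where "s = (SUP I\<in>Ic. V I)"
  have bdd: "bdd_above (V ` Ic)" using objective_le by (auto intro!: bdd_aboveI)
  have V_le_s: "V I \<le> s" if "I \<in> Ic" for I unfolding s_def by (rule cSUP_upper[OF that bdd])
  have "\<forall>n. \<exists>I. I \<in> Ic \<and> s - 1 / Suc n < V I"
  proof
    fix n
    have "s - 1 / Suc n < (SUP I\<in>Ic. V I)" by (simp add: s_def)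
    then show "\<exists>I. I \<in> Ic \<and> s - 1 / Suc n < V I"
      by (subst (asm) less_cSUP_iff[OF _ bdd]) (use Ic_id in auto)
  qed
  from choice[OF this] obtain f where "\<forall>n. f n \<in> Ic \<and> s - 1 / Suc n < V (f n)"
    by blast
  then have f: "\<And>n. f n \<in> Ic" "\<And>n. s - 1 / Suc n < V (f n)" by auto
  obtain r L where r: "strict_mono r" and L: "L \<in> Ic"
    and lim: "\<And>x. 0 \<le> x \<Longrightarrow> (\<lambda>n. f (r n) x) \<longlonglongrightarrow> L x"
  proof (rule Ic_seq_compact[of f])
    show "f n \<in> Ic" for n by (rule f(1))
  qed (rule that)
  have V_lim: "(\<lambda>n. V (f (r n))) \<longlonglongrightarrow> s"
  proof (rule tendsto_sandwich)
    have "s - 1 / Suc n \<le> V (f (r n))" for n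
    proof -
      have "1 / real (Suc (r n)) \<le> 1 / real (Suc n)"
        using seq_suble[OF r, of n] by (intro divide_left_mono) auto
      then show ?thesis using f(2)[of "r n"] by linarith
    qed
    then show "eventually (\<lambda>n. s - 1 / Suc n \<le> V (f (r n))) sequentially" by simp
    show "eventually (\<lambda>n. V (f (r n)) \<le> s) sequentially"
      using V_le_s[OF f(1)] by (rule always_eventually[OF allI])
    show "(\<lambda>n. s - 1 / Suc n) \<longlonglongrightarrow> s"
      using tendsto_diff[OF tendsto_const LIMSEQ_inverse_real_of_nat] by (simp add: inverse_eq_divide)
  qed simp
  have "s \<le> V L"
    using objective_upper_semicontinuous[where f = "\<lambda>n. f (r n)", OF f(1) L lim V_lim] by simp
  then have "optimal M \<theta> k b w u X L"
    unfolding optimal_def using L V_le_s order_trans by blast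
  then show ?thesis by blast
qed

lemma optimal_wealth_AE_eq:
  assumes o1: "optimal M \<theta> k b w u X I1" and o2: "optimal M \<theta> k b w u X I2"
  shows "AE \<omega> in M. wealth I1 (X \<omega>) = wealth I2 (X \<omega>)"
proof -
  have I1: "I1 \<in> Ic" and I2: "I2 \<in> Ic" using o1 o2 by (auto simp: optimal_def)
  define I where "I x = (I1 x + I2 x) / 2" for x
  have I: "I \<in> Ic"
    using Ic_convex_comb[OF I1 I2, of "1 / 2"] by (simp add: I_def[abs_def] add_divide_distrib)
  define gap where "gap z = utility I z - (utility I1 z + utility I2 z) / 2" for z
  have gap_nonneg: "0 \<le> gap z" for z
    using utility_midpoint(1)[OF I1 I2] by (simp add: gap_def I_def[abs_def])
  have int_gap: "integrable loss.Q gap"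
    unfolding gap_def by (intro Bochner_Integration.integrable_diff integrable_divide_zero
      Bochner_Integration.integrable_add objective_eq_integral(1) I1 I2 I)
  have "(\<integral>z. gap z \<partial>loss.Q) = V I - (V I1 + V I2) / 2"
    unfolding gap_def objective_eq_integral(2)[OF I] objective_eq_integral(2)[OF I1] objective_eq_integral(2)[OF I2]
    using objective_eq_integral(1)[OF I] objective_eq_integral(1)[OF I1] objective_eq_integral(1)[OF I2]
    by (simp add: Bochner_Integration.integral_diff Bochner_Integration.integral_add)
  also have "\<dots> \<le> 0"
    using o1 o2 I I1 I2 unfolding optimal_def by fastforce
  moreover have "0 \<le> (\<integral>z. gap z \<partial>loss.Q)"
    by (intro integral_nonneg_AE AE_I2 gap_nonneg)
  ultimately have "AE z in loss.Q. gap z = 0"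
    using integral_nonneg_eq_0_iff_AE[OF int_gap] gap_nonneg by auto
  then have "AE z in loss.Q. utility I z = (utility I1 z + utility I2 z) / 2"
    by eventually_elim (simp add: gap_def)
  then have "AE \<omega> in M. utility I (- X \<omega>) = (utility I1 (- X \<omega>) + utility I2 (- X \<omega>)) / 2"
    by (intro loss.AE_if_AE_Q b_strict_mono continuous_on_utility I I1 I2 continuous_intros) auto
  then show ?thesis
    using AE_space
  proof eventually_elim
    case (elim \<omega>)
    then show ?case
      using utility_midpoint(2)[OF I1 I2, of "- X \<omega>"] X_nonneg[OF elim(2)] by (auto simp: I_def[abs_def])
  qed
qed

lemma optimal_unique:
  assumes cond: "\<theta> \<noteq> 0 \<or> essinf M X = 0"
    and o1: "optimal M \<theta> k b w u X I1" and o2: "optimal M \<theta> k b w u X I2"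
  shows "AE \<omega> in M. I1 (X \<omega>) = I2 (X \<omega>)"
proof -
  have I1: "I1 \<in> Ic" and I2: "I2 \<in> Ic" using o1 o2 by (auto simp: optimal_def)
  define c where "c = prem I1 - prem I2"
  have ae: "AE \<omega> in M. I1 (X \<omega>) = I2 (X \<omega>) + c"
    using optimal_wealth_AE_eq[OF o1 o2] by eventually_elim (simp add: c_def wealth_def)
  have "prem I1 = prem I2 + (1 + \<theta>) * c" by (rule premium_shift[OF I2 I1 ae])
  then have "c = (1 + \<theta>) * c" using c_def by linarith
  then have "\<theta> * c = 0" by (simp add: algebra_simps)
  moreover have "c = 0" if "\<theta> = 0"
  proof -
    have "AE \<omega> in M. \<bar>c\<bar> \<le> X \<omega>"
      using ae AE_space
    proof eventually_elim
      case (elim \<omega>)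
      with IcD(1,2)[OF I1 X_nonneg[OF elim(2)] order_refl] IcD(1,2)[OF I2 X_nonneg[OF elim(2)] order_refl]
      show ?case by linarith
    qed
    then have "ereal \<bar>c\<bar> \<le> essinf M X" by (rule essinf_greatest[OF X_measurable])
    then show "c = 0" using cond that by simp
  qed
  ultimately show ?thesis using ae by auto
qed

lemma measurable_utility_of_wealth:
  assumes "I \<in> Ic"
  shows "(\<lambda>\<omega>. u (w - X \<omega> + I (X \<omega>) - p)) \<in> borel_measurable M"
proof -
  have "(\<lambda>\<omega>. w - X \<omega> + I (X \<omega>) - p) \<in> borel_measurable M"
    using measurable_indemnity[OF assms] by measurable
  then show ?thesis by (rule borel_measurable_continuous_on[OF u_continuous])
qed

lemma optimal_not_unique:
  assumes "\<theta> = 0" "essinf M X \<noteq> 0"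
  obtains I J where "optimal M \<theta> k b w u X I" "optimal M \<theta> k b w u X J"
    "\<not> (AE \<omega> in M. I (X \<omega>) = J (X \<omega>))"
proof -
  obtain d where d: "0 < d" "AE \<omega> in M. d < X \<omega>"
    by (rule AE_lower_bound_if_essinf_nonzero[OF X_measurable AE_I2[OF X_nonneg] assms(2)])
  obtain I where I: "optimal M \<theta> k b w u X I" using exists_optimal by blast
  then have I_Ic: "I \<in> Ic" by (simp add: optimal_def)
  obtain J c where J: "J \<in> Ic" and "c \<noteq> 0" and ae: "AE \<omega> in M. J (X \<omega>) = I (X \<omega>) + c"
    by (rule Ic_exists_AE_shift[OF I_Ic d])
  have prem_J: "prem J = prem I + c" using premium_shift[OF I_Ic J ae] assms(1) by simp
  have "AE \<omega> in M. u (w - X \<omega> + J (X \<omega>) - prem J) = u (w - X \<omega> + I (X \<omega>) - prem I)"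
    using ae by eventually_elim (simp add: prem_J algebra_simps)
  then have "V J = V I"
    unfolding objective_def by (intro rho_cong_AE measurable_utility_of_wealth J I_Ic)
  then have J_opt: "optimal M \<theta> k b w u X J" using I J by (simp add: optimal_def)
  have "\<not> (AE \<omega> in M. I (X \<omega>) = J (X \<omega>))"
  proof
    assume "AE \<omega> in M. I (X \<omega>) = J (X \<omega>)"
    with ae have "AE \<omega> in M. False" by eventually_elim (use \<open>c \<noteq> 0\<close> in simp)
    then show False by (simp add: AE_False)
  qed
  then show ?thesis by (rule that[OF I J_opt])
qed

end

theorem proposition2p3:
  fixes M :: "'a measure" and X :: "'a \<Rightarrow> real"
    and \<theta> w :: real and k b u :: "real \<Rightarrow> real"
  assumes "prob_space M"
    and "X \<in> borel_measurable M" and "\<forall>\<omega>\<in>space M. X \<omega> \<ge> 0" and "integrable M X"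
    and "\<theta> > -1"
    and "continuous_on {0..1} k" and "concave_on {0..1} k"
    and "\<forall>p\<in>{0..1}. k p \<ge> 0" and "k 0 = 0" and "k 1 = 0"
    and "\<exists>u' u''. (\<forall>x. (u has_real_derivative u' x) (at x)) \<and>
                 (\<forall>x. (u' has_real_derivative u'' x) (at x)) \<and> continuous_on UNIV u''"
    and "strict_mono u" and "concave_on UNIV u" and "strictly_concave_on UNIV u"
    and "\<exists>b'. continuous_on {0..1} b' \<and>
               (\<forall>p\<in>{0..1}. (b has_real_derivative b' p) (at p within {0..1}))"
    and "strict_mono_on {0..1} b" and "convex_on {0..1} b"
    and "\<forall>p\<in>{0..1}. b p \<in> {0..1}" and "b 0 = 0" and "b 1 = 1"
    and "\<forall>I\<in>Ic. rho_finite M k (\<lambda>\<omega>. I (X \<omega>))"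
    and "\<forall>I\<in>Ic. rho_finite M b
           (\<lambda>\<omega>. u (w - X \<omega> + I (X \<omega>) - premium M \<theta> k (\<lambda>\<omega>'. I (X \<omega>'))))"
  shows "(\<forall>I1 I2. optimal M \<theta> k b w u X I1 \<and> optimal M \<theta> k b w u X I2
                  \<longrightarrow> (AE \<omega> in M. I1 (X \<omega>) = I2 (X \<omega>)))
         \<longleftrightarrow> (\<theta> \<noteq> 0 \<or> essinf M X = 0)"
proof -
  have "continuous_on UNIV u"
    using assms(11) by (auto intro: continuous_at_imp_continuous_on DERIV_isCont)
  moreover have "continuous_on {0..1} b"
    using assms(15) by (auto simp: continuous_on_eq_continuous_within intro: DERIV_continuous)
  \<comment> \<open>Smoothness of \<open>u\<close> and \<open>b\<close> enters only through continuity.\<close>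
  ultimately interpret indemnity_problem M X \<theta> w k b u
    using assms(1-10,12,14,16,19-22)
    by (intro indemnity_problem.intro indemnity_problem_axioms.intro) simp_all
  show ?thesis
  proof
    assume unique: "\<forall>I1 I2. optimal M \<theta> k b w u X I1 \<and> optimal M \<theta> k b w u X I2
      \<longrightarrow> (AE \<omega> in M. I1 (X \<omega>) = I2 (X \<omega>))"
    show "\<theta> \<noteq> 0 \<or> essinf M X = 0"
    proof (rule ccontr)
      assume "\<not> (\<theta> \<noteq> 0 \<or> essinf M X = 0)"
      then have "\<theta> = 0" "essinf M X \<noteq> 0" by auto
      then obtain I J where "optimal M \<theta> k b w u X I" "optimal M \<theta> k b w u X J"
        "\<not> (AE \<omega> in M. I (X \<omega>) = J (X \<omega>))"
        by (rule optimal_not_unique)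
      with unique show False by blast
    qed
  qed (use optimal_unique in blast)
qed

end
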